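(* Let $\mathbf d=(d_1,\ldots,d_n)$ be positive integers and let $\tilde{\mathcal H}=V\left(\left(\prod_{i=1}^n(x_i+1)\right)-1\right)\subset\mathbb{C}^n$. Then the $\mathbf d$-osculants of $\tilde{\mathcal H}$ are in bijection with the primitive $\mathbf d$-necklaces.
   Context: $|\mathbf d|=\sum d_i$. A $\mathbf d$-parametrization is a polynomial map $\mathbf x(t)=(x_1(t),\ldots,x_n(t))$ with $x_i\in\mathbb{C}[t]$ of degree $d_i$ and $\mathbf x(0)=\mathbf 0$; it is $1$-fold if generically one-to-one onto its image. A $\mathbf d$-osculant of $V(f)$ is a curve which is the image of a $1$-fold $\mathbf d$-parametrization with $f(\mathbf x(t))\equiv0\pmod{t^{|\mathbf d|}}$ (counted as distinct image curves). A $\mathbf d$-necklace is a circular arrangement of $|\mathbf d|$ beads with $d_i$ of color $i$, modulo rotation; it is primitive if its rotation orbit has $|\mathbf d|$ elements. *)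

theory Defs
  imports "HOL-Computational_Algebra.Polynomial"
begin

text \<open>A multidegree d = (d_1,...,d_n) is a list of naturals; colours/coordinates
  are indexed 0..n-1. A point of C^n is a list of length n.\<close>

definition dsize :: "nat list \<Rightarrow> nat" where
  "dsize d = sum_list d"

definition is_dparam :: "nat list \<Rightarrow> complex poly list \<Rightarrow> bool" where
  "is_dparam d xs \<longleftrightarrow> length xs = length d \<and>
     (\<forall>i < length d. degree (xs ! i) = d ! i \<and> poly (xs ! i) 0 = 0)"

definition param_eval :: "complex poly list \<Rightarrow> complex \<Rightarrow> complex list" where
  "param_eval xs t = map (\<lambda>p. poly p t) xs"

definition one_fold :: "complex poly list \<Rightarrow> bool" where
  "one_fold xs \<longleftrightarrow> (\<exists>S. finite S \<and>
     (\<forall>t s. t \<notin> S \<longrightarrow> param_eval xs s = param_eval xs t \<longrightarrow> s = t))"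

definition H_comp :: "complex poly list \<Rightarrow> complex poly" where
  "H_comp xs = prod_list (map (\<lambda>p. p + 1) xs) - 1"

definition param_image :: "complex poly list \<Rightarrow> complex list set" where
  "param_image xs = range (param_eval xs)"

definition H_osculants :: "nat list \<Rightarrow> complex list set set" where
  "H_osculants d = {param_image xs | xs. is_dparam d xs \<and> one_fold xs \<and>
                     monom 1 (dsize d) dvd H_comp xs}"

definition is_dword :: "nat list \<Rightarrow> nat list \<Rightarrow> bool" where
  "is_dword d w \<longleftrightarrow> length w = dsize d \<and> set w \<subseteq> {..<length d} \<and>
     (\<forall>i < length d. count_list w i = d ! i)"

definition rot_orbit :: "'a list \<Rightarrow> 'a list set" where
  "rot_orbit w = {rotate k w | k. True}"

definition primitive_necklaces :: "nat list \<Rightarrow> nat list set set" where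
  "primitive_necklaces d = {rot_orbit w | w. is_dword d w \<and> card (rot_orbit w) = dsize d}"

end

(*
  Let x be a d-osculant and N = |d|. The product P = prod (x_i + 1) has degree N and
  P = 1 mod t^N, so P = 1 + a t^N with a ~= 0. Its roots are the N points r zeta^k,
  k < N, for one root r and zeta a primitive N-th root of unity. The factor x_i + 1 has
  at most d_i roots and sum d_i = N, so by double counting every r zeta^k is a root of
  exactly one factor and x_i + 1 has exactly d_i of them. Recording which factor vanishes
  at r zeta^k gives a d-word w, and since x_i + 1 is determined by its roots and x_i(0) = 0,
  the reparametrization t |-> r t turns x into the curve attached to w. Rotating w by j
  amounts to t |-> zeta^j t. If two word curves coincide, a pigeonhole argument shows that
  their parametrizations differ by such a rescaling, so the words are rotations of each
  other. Finally a word curve is 1-fold exactly when no nontrivial rotation fixes the word,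
  i.e. when its necklace is primitive.
*)
theory Submission
  imports Defs
begin

section \<open>Bijections and double counting\<close>

lemma bij_betw_images_same_kernel:
  assumes "\<And>x y. x \<in> S \<Longrightarrow> y \<in> S \<Longrightarrow> f x = f y \<longleftrightarrow> g x = g y"
  shows "bij_betw (\<lambda>z. g (inv_into S f z)) (f ` S) (g ` S)"
proof -
  have g_inv: "g (inv_into S f (f x)) = g x" if "x \<in> S" for x
    using assms[of "inv_into S f (f x)" x] that by (simp add: inv_into_into f_inv_into_f)
  show ?thesis
    unfolding bij_betw_def
  proof
    show "inj_on (\<lambda>z. g (inv_into S f z)) (f ` S)"
      by (rule inj_onI) (auto simp: g_inv assms)
    show "(\<lambda>z. g (inv_into S f z)) ` f ` S = g ` S"
      by (force simp: g_inv image_image)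
  qed
qed

lemma double_counting_tight:
  assumes "finite A" "finite B"
    and cover: "\<And>a. a \<in> A \<Longrightarrow> \<exists>b\<in>B. R a b"
    and bound: "\<And>b. b \<in> B \<Longrightarrow> card {a\<in>A. R a b} \<le> m b"
    and total: "(\<Sum>b\<in>B. m b) \<le> card A"
  shows "\<And>a. a \<in> A \<Longrightarrow> \<exists>!b. b \<in> B \<and> R a b"
    and "\<And>b. b \<in> B \<Longrightarrow> card {a\<in>A. R a b} = m b"
proof -
  define degA where "degA a = card {b\<in>B. R a b}" for a
  define degB where "degB b = card {a\<in>A. R a b}" for b
  have swap: "(\<Sum>a\<in>A. degA a) = (\<Sum>b\<in>B. degB b)"
  proof -
    have "(\<Sum>a\<in>A. degA a) = (\<Sum>a\<in>A. \<Sum>b\<in>B. of_bool (R a b))"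
      using \<open>finite B\<close> by (simp add: degA_def Int_def conj_commute)
    also have "\<dots> = (\<Sum>b\<in>B. \<Sum>a\<in>A. of_bool (R a b))"
      by (rule sum.swap)
    also have "\<dots> = (\<Sum>b\<in>B. degB b)"
      using \<open>finite A\<close> by (simp add: degB_def Int_def conj_commute)
    finally show ?thesis .
  qed
  have degA_pos: "1 \<le> degA a" if "a \<in> A" for a
    using cover[OF that] \<open>finite B\<close> by (auto simp: degA_def Suc_le_eq card_gt_0_iff)
  have "(\<Sum>a\<in>A. 1) \<le> (\<Sum>a\<in>A. degA a)"
    using degA_pos by (rule sum_mono)
  moreover have "(\<Sum>b\<in>B. degB b) \<le> (\<Sum>b\<in>B. m b)"
    unfolding degB_def using bound by (rule sum_mono)
  moreover have "(\<Sum>b\<in>B. m b) \<le> (\<Sum>a\<in>A. 1)"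
    using total by simp
  ultimately have sums: "(\<Sum>a\<in>A. degA a) = (\<Sum>a\<in>A. 1)" "(\<Sum>b\<in>B. degB b) = (\<Sum>b\<in>B. m b)"
    using swap by linarith+
  show "\<exists>!b. b \<in> B \<and> R a b" if "a \<in> A" for a
  proof -
    have "degA a = 1"
      using sum_mono_inv[OF sums(1)[symmetric] degA_pos that \<open>finite A\<close>] by simp
    then obtain b0 where "{b\<in>B. R a b} = {b0}"
      unfolding degA_def by (rule card_1_singletonE)
    then show ?thesis
      by (auto simp: set_eq_iff)
  qed
  show "card {a\<in>A. R a b} = m b" if "b \<in> B" for b
    using sum_mono_inv[OF sums(2) _ that \<open>finite B\<close>] bound by (simp add: degB_def)
qed

section \<open>Words and rotations\<close>

lemma count_list_conv_card: "count_list xs y = card {k. k < length xs \<and> xs ! k = y}"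
  by (simp add: count_list_eq_length_filter length_filter_conv_card eq_commute)

lemma count_list_rotate: "count_list (rotate j xs) y = count_list xs y"
  by (metis append_take_drop_id count_list_append rotate_drop_take add.commute)

lemma rotate_back: "rotate (length xs - j mod length xs) (rotate j xs) = xs"
proof (cases "xs = []")
  case False
  have "j mod length xs < length xs"
    using False by simp
  then have "length xs - j mod length xs + j = length xs + length xs * (j div length xs)"
    using minus_mod_eq_mult_div[of j "length xs"] mod_less_eq_dividend[of j "length xs"] by linarith
  then have "(length xs - j mod length xs + j) mod length xs = 0"
    by simp
  then show ?thesis
    by (simp add: rotate_rotate)
qed simp

lemma rot_orbit_eq_iff: "rot_orbit v = rot_orbit w \<longleftrightarrow> (\<exists>j. v = rotate j w)"
proof
  assume "rot_orbit v = rot_orbit w"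
  moreover have "v \<in> rot_orbit v"
    unfolding rot_orbit_def by (metis (mono_tags) mem_Collect_eq rotate0 id_apply)
  ultimately show "\<exists>j. v = rotate j w"
    by (auto simp: rot_orbit_def)
next
  assume "\<exists>j. v = rotate j w"
  then obtain j where v: "v = rotate j w" by blast
  have "rotate k w = rotate (k + (length w - j mod length w)) v" for k
    using rotate_back[of w j] by (simp add: v rotate_rotate[symmetric])
  then show "rot_orbit v = rot_orbit w"
    unfolding rot_orbit_def v by (auto simp: rotate_rotate)
qed

lemma card_rot_orbit_eq_length_iff:
  assumes "xs \<noteq> []"
  shows "card (rot_orbit xs) = length xs \<longleftrightarrow> (\<forall>j. 0 < j \<and> j < length xs \<longrightarrow> rotate j xs \<noteq> xs)"
proof -
  have "rot_orbit xs = (\<lambda>k. rotate k xs) ` {..<length xs}"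
    unfolding rot_orbit_def using assms
    by (auto simp: image_iff intro: exI[of _ "_ mod length xs"] rotate_conv_mod)
  then have "card (rot_orbit xs) = length xs \<longleftrightarrow> inj_on (\<lambda>k. rotate k xs) {..<length xs}"
    by (simp add: inj_on_iff_eq_card)
  also have "\<dots> \<longleftrightarrow> (\<forall>j. 0 < j \<and> j < length xs \<longrightarrow> rotate j xs \<noteq> xs)"
  proof
    assume "inj_on (\<lambda>k. rotate k xs) {..<length xs}"
    then show "\<forall>j. 0 < j \<and> j < length xs \<longrightarrow> rotate j xs \<noteq> xs"
      using assms by (force dest: inj_onD[of _ _ _ 0])
  next
    assume no_period: "\<forall>j. 0 < j \<and> j < length xs \<longrightarrow> rotate j xs \<noteq> xs"
    have "a = b" if "a \<le> b" "b < length xs" "rotate a xs = rotate b xs" for a b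
    proof -
      have shift: "length xs - a + a = length xs"
        using that by simp
      have "rotate (b - a) xs = rotate (b - a + length xs) xs"
        by (metis rotate_conv_mod mod_add_self2)
      also have "\<dots> = rotate (length xs - a) (rotate b xs)"
        using that by (simp add: rotate_rotate add.commute)
      also have "\<dots> = rotate (length xs - a) (rotate a xs)"
        using that by simp
      also have "\<dots> = xs"
        by (simp only: rotate_rotate shift rotate_id mod_self)
      finally have "rotate (b - a) xs = xs" .
      then show "a = b"
        using no_period that by (cases "a < b") auto
    qed
    then show "inj_on (\<lambda>k. rotate k xs) {..<length xs}"
      by (metis (no_types, lifting) inj_onI lessThan_iff nat_le_linear)
  qed
  finally show ?thesis .
qed

lemma word_of_unique_choice:
  assumes "\<And>k. k < N \<Longrightarrow> \<exists>!i. i < n \<and> Z k i"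
  shows "\<exists>w. length w = N \<and> set w \<subseteq> {..<n} \<and> (\<forall>k<N. \<forall>i<n. w ! k = i \<longleftrightarrow> Z k i)"
proof -
  define w where "w = map (\<lambda>k. THE i. i < n \<and> Z k i) [0..<N]"
  have w_nth: "w ! k < n \<and> Z k (w ! k)" if "k < N" for k
    using theI'[OF assms[OF that]] that by (simp add: w_def)
  then have "\<forall>k<N. \<forall>i<n. w ! k = i \<longleftrightarrow> Z k i"
    using assms by blast
  moreover have "length w = N"
    by (simp add: w_def)
  moreover have "set w \<subseteq> {..<n}"
    using w_nth \<open>length w = N\<close> by (auto simp: in_set_conv_nth)
  ultimately show ?thesis
    by blast
qed

section \<open>Roots of unity\<close>

definition root_unity :: "nat \<Rightarrow> complex" where
  "root_unity N = cis (2 * pi / real N)"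

lemma root_unity_power: "root_unity N ^ k = cis (2 * pi * real k / real N)"
  by (simp add: root_unity_def DeMoivre mult_ac)

lemma root_unity_nonzero [simp]: "root_unity N \<noteq> 0"
  by (simp add: root_unity_def)

lemma root_unity_power_self [simp]: "root_unity N ^ N = 1"
  by (cases "N = 0") (simp_all add: root_unity_power complex_eq_iff)

lemma root_unity_power_mod: "root_unity N ^ (k mod N) = root_unity N ^ k"
  by (metis div_mult_mod_eq power_add power_mult mult.commute power_one root_unity_power_self mult_1)

lemma bij_betw_root_unity_power:
  "N > 0 \<Longrightarrow> bij_betw (\<lambda>k. root_unity N ^ k) {..<N} {z. z ^ N = 1}"
  unfolding root_unity_power by (rule bij_betw_roots_unity)

lemma roots_unity_eq_image:
  "N > 0 \<Longrightarrow> {z. z ^ N = 1} = (\<lambda>k. root_unity N ^ k) ` {..<N}"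
  using bij_betw_root_unity_power by (simp add: bij_betw_def)

lemma inj_on_root_unity_power: "inj_on (\<lambda>k. root_unity N ^ k) {..<N}"
  by (cases "N = 0") (auto dest: bij_betw_root_unity_power simp: bij_betw_def)

lemma power_eq_powerD:
  fixes s t :: "'a::field"
  assumes "s ^ N = t ^ N" "N > 0"
  shows "\<exists>c. c ^ N = 1 \<and> t = c * s"
proof (cases "s = 0")
  case True
  then show ?thesis
    using assms by (intro exI[of _ 1]) (auto simp: power_0_left)
next
  case False
  then show ?thesis
    by (intro exI[of _ "t / s"]) (simp add: power_divide flip: assms(1))
qed

lemma complex_nth_root_exists:
  assumes "0 < N"
  shows "\<exists>z::complex. z ^ N = c"
proof (cases "c = 0")
  case False
  have "(1::complex) \<in> {z. z ^ N = 1}" by simp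
  then show ?thesis
    using bij_betwE[OF bij_betw_nth_root_unity[OF False assms]] by blast
qed (use assms in auto)

section \<open>Polynomials with prescribed roots\<close>

lemma degree_diff_1:
  fixes p :: "'a::comm_ring_1 poly"
  assumes "0 < degree p"
  shows "degree (p - 1) = degree p"
  using degree_add_eq_left[of "-1" p] assms by simp

lemma degree_prod_list_eq:
  fixes ps :: "'a::idom poly list"
  assumes "0 \<notin> set ps"
  shows "degree (prod_list ps) = sum_list (map degree ps)"
  using assms by (induction ps) (auto simp: degree_mult_eq prod_list_zero_iff)

lemma eq_monom_if_monom_dvd:
  assumes "monom 1 n dvd p" "degree p \<le> n"
  shows "p = monom (coeff p n) n"
proof (rule poly_eqI)
  fix k
  show "coeff p k = coeff (monom (coeff p n) n) k"
    using assms monom_1_dvd_iff'[of n p] coeff_eq_0[of p k]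
    by (cases k n rule: linorder_cases) (auto simp: coeff_monom)
qed

definition roots_poly :: "'a::field set \<Rightarrow> 'a poly" where
  "roots_poly S = (\<Prod>a\<in>S. [:1, - inverse a:])"

lemma poly_roots_poly: "poly (roots_poly S) x = (\<Prod>a\<in>S. 1 - inverse a * x)"
  by (simp add: roots_poly_def poly_prod mult.commute)

lemma poly_roots_poly_0 [simp]: "poly (roots_poly S) 0 = 1"
  by (simp add: poly_roots_poly)

lemma roots_poly_eq_0_iff:
  assumes "finite S" "0 \<notin> S"
  shows "poly (roots_poly S) x = 0 \<longleftrightarrow> x \<in> S"
proof -
  have "1 - inverse a * x = 0 \<longleftrightarrow> x = a" if "a \<in> S" for a
    using assms that by (auto simp: field_simps)
  then show ?thesis
    using assms by (auto simp: poly_roots_poly prod_zero_iff)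
qed

lemma degree_roots_poly:
  assumes "finite S" "0 \<notin> S"
  shows "degree (roots_poly S) = card S"
proof -
  have "degree [:1, - inverse a:] = 1" if "a \<in> S" for a
    using assms that by auto
  then show ?thesis
    using assms unfolding roots_poly_def by (subst degree_prod_eq_sum_degree) auto
qed

lemma roots_poly_unique:
  assumes "finite S" "0 \<notin> S" "degree p \<le> card S" "poly p 0 = 1" "\<And>a. a \<in> S \<Longrightarrow> poly p a = 0"
  shows "p = roots_poly S"
proof (rule ccontr)
  assume "p \<noteq> roots_poly S"
  then have nz: "p - roots_poly S \<noteq> 0" by simp
  have "insert 0 S \<subseteq> {x. poly (p - roots_poly S) x = 0}"
    using assms by (auto simp: roots_poly_eq_0_iff)
  then have "card (insert 0 S) \<le> card {x. poly (p - roots_poly S) x = 0}"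
    using nz by (intro card_mono poly_roots_finite)
  also have "\<dots> \<le> degree (p - roots_poly S)"
    using nz by (rule card_poly_roots_bound)
  also have "\<dots> \<le> card S"
    using assms degree_diff_le[of p "card S" "roots_poly S"] by (simp add: degree_roots_poly)
  finally show False
    using assms by simp
qed

lemma roots_poly_roots_unity:
  assumes "N > 0"
  shows "roots_poly {z::complex. z ^ N = 1} = 1 - monom 1 N"
proof (rule sym, rule roots_poly_unique)
  show "degree (1 - monom 1 N :: complex poly) \<le> card {z::complex. z ^ N = 1}"
    using assms by (simp add: card_roots_unity_eq degree_diff_le degree_monom_le)
qed (use assms in \<open>auto simp: finite_roots_unity poly_monom power_0_left\<close>)

lemma card_roots_on_scaled_roots_unity_le:
  fixes p :: "complex poly"
  assumes "p \<noteq> 0" "r \<noteq> 0"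
  shows "card {k\<in>{..<N}. poly p (r * root_unity N ^ k) = 0} \<le> degree p"
proof -
  let ?K = "{k\<in>{..<N}. poly p (r * root_unity N ^ k) = 0}"
  have "inj_on (\<lambda>k. r * root_unity N ^ k) ?K"
    using inj_on_root_unity_power[of N] assms(2) by (auto intro!: inj_onI dest: inj_onD)
  then have "card ?K = card ((\<lambda>k. r * root_unity N ^ k) ` ?K)"
    by (simp add: card_image)
  also have "\<dots> \<le> card {t. poly p t = 0}"
    using assms(1) by (intro card_mono poly_roots_finite) auto
  also have "\<dots> \<le> degree p"
    using assms(1) by (rule card_poly_roots_bound)
  finally show ?thesis .
qed

section \<open>Rescaled parametrizations\<close>

definition rescale :: "'a::comm_semiring_0 \<Rightarrow> 'a poly list \<Rightarrow> 'a poly list" where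
  "rescale c xs = map (\<lambda>p. p \<circ>\<^sub>p [:0, c:]) xs"

lemma param_eval_rescale [simp]: "param_eval (rescale c xs) t = param_eval xs (c * t)"
  by (simp add: rescale_def param_eval_def poly_pcompose mult.commute)

lemma param_image_rescale:
  assumes "c \<noteq> 0"
  shows "param_image (rescale c xs) = param_image xs"
proof -
  have "range (\<lambda>t. c * t) = (UNIV :: complex set)"
    using assms by (auto intro!: image_eqI[of _ _ "_ / c"])
  then have "param_eval xs ` range (\<lambda>t. c * t) = param_image xs"
    by (simp add: param_image_def)
  then show ?thesis
    by (simp add: param_image_def image_image)
qed

lemma one_fold_rescale:
  assumes "c \<noteq> 0" "one_fold xs"
  shows "one_fold (rescale c xs)"
proof -
  obtain S where S: "finite S" "\<And>t s. t \<notin> S \<Longrightarrow> param_eval xs s = param_eval xs t \<Longrightarrow> s = t"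
    using assms(2) unfolding one_fold_def by blast
  have "s = t" if "t \<notin> (\<lambda>a. a / c) ` S" "param_eval (rescale c xs) s = param_eval (rescale c xs) t" for s t
  proof -
    have "c * t \<notin> S"
      using assms(1) that(1) by (auto intro: image_eqI[of _ _ "c * t"])
    then show "s = t"
      using S(2)[of "c * t" "c * s"] assms(1) that(2) by simp
  qed
  then show ?thesis
    unfolding one_fold_def using S(1) by blast
qed

lemma eq_if_infinite_param_eval_agree:
  assumes "infinite {t. param_eval xs t = param_eval ys t}"
  shows "xs = ys"
proof (rule nth_equalityI)
  obtain t0 where "param_eval xs t0 = param_eval ys t0"
    using assms not_finite_existsD by blast
  then show len: "length xs = length ys"
    unfolding param_eval_def by (metis length_map)
  fix i assume i: "i < length xs"
  have "poly (xs ! i - ys ! i) t = 0" if "param_eval xs t = param_eval ys t" for t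
  proof -
    have "param_eval xs t ! i = param_eval ys t ! i"
      using that by simp
    then show ?thesis
      using i len by (simp add: param_eval_def)
  qed
  then have "{t. param_eval xs t = param_eval ys t} \<subseteq> {t. poly (xs ! i - ys ! i) t = 0}"
    by blast
  then show "xs ! i = ys ! i"
    using assms poly_roots_finite[of "xs ! i - ys ! i"] finite_subset by auto
qed

lemma poly_H_comp: "poly (H_comp xs) t = prod_list (map (\<lambda>v. v + 1) (param_eval xs t)) - 1"
  by (induction xs) (simp_all add: H_comp_def param_eval_def)

lemma one_fold_iff_no_rescale_symmetry:
  assumes "finite C" and same_point: "\<And>s t. param_eval xs s = param_eval xs t \<Longrightarrow> \<exists>c\<in>C. s = c * t"
  shows "one_fold xs \<longleftrightarrow> (\<forall>c\<in>C - {1}. rescale c xs \<noteq> xs)"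
proof
  assume "one_fold xs"
  then obtain S where S: "finite S" "\<And>t s. t \<notin> S \<Longrightarrow> param_eval xs s = param_eval xs t \<Longrightarrow> s = t"
    unfolding one_fold_def by blast
  obtain t :: complex where t: "t \<notin> insert 0 S"
    using S(1) ex_new_if_finite[OF infinite_UNIV_char_0] by (metis finite_insert)
  show "\<forall>c\<in>C - {1}. rescale c xs \<noteq> xs"
  proof (intro ballI notI)
    fix c assume "c \<in> C - {1}" "rescale c xs = xs"
    then have "param_eval xs (c * t) = param_eval xs t"
      by (metis param_eval_rescale)
    then have "c * t = t"
      using S(2) t by blast
    then show False
      using t \<open>c \<in> C - {1}\<close> by simp
  qed
next
  assume no_symmetry: "\<forall>c\<in>C - {1}. rescale c xs \<noteq> xs"
  define S where "S = (\<Union>c\<in>C - {1}. {t. param_eval xs (c * t) = param_eval xs t})"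
  have "finite {t. param_eval xs (c * t) = param_eval xs t}" if "c \<in> C - {1}" for c
    using eq_if_infinite_param_eval_agree[of "rescale c xs" xs] no_symmetry that by auto
  then have "finite S"
    unfolding S_def using \<open>finite C\<close> by blast
  moreover have "s = t" if "t \<notin> S" and eq: "param_eval xs s = param_eval xs t" for s t
  proof -
    obtain c where "c \<in> C" "s = c * t"
      using same_point[OF eq] by blast
    then show "s = t"
      using that unfolding S_def by (cases "c = 1") auto
  qed
  ultimately show "one_fold xs"
    unfolding one_fold_def by blast
qed

lemma rescale_of_param_image_subset:
  assumes "finite C" "param_image ys \<subseteq> param_image xs"
    and same_point: "\<And>s t. param_eval ys s = param_eval xs t \<Longrightarrow> \<exists>c\<in>C. t = c * s"
  shows "\<exists>c\<in>C. ys = rescale c xs"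
proof -
  define E where "E c = {s. param_eval ys s = param_eval (rescale c xs) s}" for c
  have "(\<Union>c\<in>C. E c) = UNIV"
  proof (intro set_eqI iffI)
    fix s
    obtain t where "param_eval ys s = param_eval xs t"
      using assms(2) unfolding param_image_def by blast
    then show "s \<in> (\<Union>c\<in>C. E c)"
      using same_point unfolding E_def by fastforce
  qed simp
  then obtain c where "c \<in> C" "infinite (E c)"
    using \<open>finite C\<close> infinite_UNIV_char_0 by (metis finite_UN)
  then show ?thesis
    using eq_if_infinite_param_eval_agree unfolding E_def by blast
qed

section \<open>The curve of a word\<close>

definition necklace_factor :: "nat list \<Rightarrow> nat \<Rightarrow> complex poly" where
  "necklace_factor w i = roots_poly ((\<lambda>k. root_unity (length w) ^ k) ` {k. k < length w \<and> w ! k = i})"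

definition necklace_param :: "nat \<Rightarrow> nat list \<Rightarrow> complex poly list" where
  "necklace_param n w = map (\<lambda>i. necklace_factor w i - 1) [0..<n]"

lemma necklace_roots_finite_nonzero:
  "finite ((\<lambda>k. root_unity (length w) ^ k) ` {k. k < length w \<and> w ! k = i})"
  "0 \<notin> (\<lambda>k. root_unity (length w) ^ k) ` {k. k < length w \<and> w ! k = i}"
  by auto

lemma poly_necklace_factor_0 [simp]: "poly (necklace_factor w i) 0 = 1"
  by (simp add: necklace_factor_def)

lemma degree_necklace_factor: "degree (necklace_factor w i) = count_list w i"
proof -
  have "inj_on (\<lambda>k. root_unity (length w) ^ k) {k. k < length w \<and> w ! k = i}"
    by (rule inj_on_subset[OF inj_on_root_unity_power]) auto
  then show ?thesis
    by (simp add: necklace_factor_def degree_roots_poly[OF necklace_roots_finite_nonzero]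
        card_image count_list_conv_card)
qed

lemma necklace_factor_root_iff:
  assumes "k < length w"
  shows "poly (necklace_factor w i) (root_unity (length w) ^ k) = 0 \<longleftrightarrow> w ! k = i"
  using assms inj_on_root_unity_power[of "length w"]
  by (auto simp: necklace_factor_def roots_poly_eq_0_iff[OF necklace_roots_finite_nonzero]
      dest: inj_onD)

lemma necklace_factor_unique:
  assumes "poly q 0 = 1" "degree q \<le> count_list w i"
    and "\<And>k. k < length w \<Longrightarrow> w ! k = i \<Longrightarrow> poly q (root_unity (length w) ^ k) = 0"
  shows "q = necklace_factor w i"
  unfolding necklace_factor_def
proof (rule roots_poly_unique)
  show "degree q \<le> card ((\<lambda>k. root_unity (length w) ^ k) ` {k. k < length w \<and> w ! k = i})"
    using assms(2) degree_necklace_factor[of w i]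
    by (simp add: necklace_factor_def degree_roots_poly[OF necklace_roots_finite_nonzero])
qed (use assms in auto)

lemma necklace_factor_rotate:
  "necklace_factor (rotate j w) i = necklace_factor w i \<circ>\<^sub>p [:0, root_unity (length w) ^ j:]"
proof (rule sym, rule necklace_factor_unique)
  show "poly (necklace_factor w i \<circ>\<^sub>p [:0, root_unity (length w) ^ j:]) 0 = 1"
    by (simp add: poly_pcompose)
  show "degree (necklace_factor w i \<circ>\<^sub>p [:0, root_unity (length w) ^ j:]) \<le> count_list (rotate j w) i"
    by (simp add: degree_pcompose degree_necklace_factor count_list_rotate)
  fix k assume k: "k < length (rotate j w)" "rotate j w ! k = i"
  then have "w ! ((j + k) mod length w) = i"
    by (simp add: nth_rotate)
  moreover have "(j + k) mod length w < length w"
    using k(1) by (intro mod_less_divisor) auto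
  moreover have "root_unity (length w) ^ j * root_unity (length w) ^ k
      = root_unity (length w) ^ ((j + k) mod length w)"
    by (simp add: root_unity_power_mod power_add)
  ultimately show "poly (necklace_factor w i \<circ>\<^sub>p [:0, root_unity (length w) ^ j:])
      (root_unity (length (rotate j w)) ^ k) = 0"
    by (simp add: poly_pcompose necklace_factor_root_iff mult.commute)
qed

lemma length_necklace_param [simp]: "length (necklace_param n w) = n"
  by (simp add: necklace_param_def)

lemma necklace_param_nth [simp]: "i < n \<Longrightarrow> necklace_param n w ! i = necklace_factor w i - 1"
  by (simp add: necklace_param_def)

lemma necklace_param_rotate:
  "necklace_param n (rotate j w) = rescale (root_unity (length w) ^ j) (necklace_param n w)"
  by (rule nth_equalityI) (simp_all add: rescale_def necklace_factor_rotate pcompose_diff pcompose_1)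

lemma necklace_param_inj:
  assumes "set v \<subseteq> {..<n}" "length v = length w" "necklace_param n v = necklace_param n w"
  shows "v = w"
proof (rule nth_equalityI)
  show "length v = length w" by fact
  fix k assume k: "k < length v"
  define i where "i = v ! k"
  have "i < n"
    using assms(1) nth_mem[OF k] by (auto simp: i_def)
  then have "necklace_factor v i = necklace_factor w i"
    using arg_cong[OF assms(3), of "\<lambda>xs. xs ! i + 1"] by simp
  then show "v ! k = w ! k"
    using necklace_factor_root_iff[of k v i] necklace_factor_root_iff[of k w i] k assms(2)
    by (simp add: i_def)
qed

lemma H_comp_necklace_param:
  assumes "set w \<subseteq> {..<n}" "w \<noteq> []"
  shows "H_comp (necklace_param n w) = - monom 1 (length w)"
proof -
  define R where "R i = (\<lambda>k. root_unity (length w) ^ k) ` {k. k < length w \<and> w ! k = i}" for i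
  have "(\<Union>i<n. R i) = (\<lambda>k. root_unity (length w) ^ k) ` {..<length w}"
    using assms(1) nth_mem by (fastforce simp: R_def)
  also have "\<dots> = {z. z ^ length w = 1}"
    using assms(2) by (simp add: roots_unity_eq_image)
  finally have union: "(\<Union>i<n. R i) = {z. z ^ length w = 1}" .
  have disjoint: "R i \<inter> R i' = {}" if "i \<noteq> i'" for i i'
    using that inj_on_root_unity_power[of "length w"] by (auto simp: R_def dest: inj_onD)
  have "prod_list (map (\<lambda>p. p + 1) (necklace_param n w)) = (\<Prod>i<n. necklace_factor w i)"
    by (simp add: necklace_param_def comp_def prod.distinct_set_conv_list[symmetric] atLeast0LessThan)
  also have "\<dots> = roots_poly (\<Union>i<n. R i)"
    unfolding necklace_factor_def roots_poly_def R_def[symmetric]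
    using disjoint by (subst prod.UNION_disjoint) (auto simp: R_def)
  also have "\<dots> = 1 - monom 1 (length w)"
    using assms(2) by (simp add: union roots_poly_roots_unity)
  finally show ?thesis
    by (simp add: H_comp_def)
qed

lemma is_dparam_necklace_param:
  assumes "is_dword d w" "\<forall>i<length d. 0 < d ! i"
  shows "is_dparam d (necklace_param (length d) w)"
  unfolding is_dparam_def
proof (intro conjI allI impI)
  fix i assume "i < length d"
  then have "degree (necklace_factor w i) = d ! i" "0 < d ! i"
    using assms by (simp_all add: degree_necklace_factor is_dword_def)
  then show "degree (necklace_param (length d) w ! i) = d ! i"
    using \<open>i < length d\<close> by (simp add: degree_diff_1)
qed simp_all

lemma param_eval_necklace_paramD:
  assumes "param_eval (necklace_param n v) s = param_eval (necklace_param n w) t"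
    and "set v \<subseteq> {..<n}" "set w \<subseteq> {..<n}" "length v = length w" "w \<noteq> []"
  shows "\<exists>c. c ^ length w = 1 \<and> t = c * s"
proof -
  have "v \<noteq> []"
    using assms(4,5) by auto
  have "poly (H_comp (necklace_param n v)) s = poly (H_comp (necklace_param n w)) t"
    using assms(1) by (simp add: poly_H_comp)
  then have "s ^ length w = t ^ length w"
    using assms(2-5) \<open>v \<noteq> []\<close> by (simp add: H_comp_necklace_param poly_monom)
  then show ?thesis
    using assms(5) by (intro power_eq_powerD) auto
qed

lemma one_fold_necklace_param_iff:
  assumes "set w \<subseteq> {..<n}" "w \<noteq> []"
  shows "one_fold (necklace_param n w) \<longleftrightarrow> card (rot_orbit w) = length w"
proof -
  let ?\<zeta> = "root_unity (length w)"
  have "one_fold (necklace_param n w) \<longleftrightarrow>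
      (\<forall>c\<in>{z. z ^ length w = 1} - {1}. rescale c (necklace_param n w) \<noteq> necklace_param n w)"
  proof (rule one_fold_iff_no_rescale_symmetry)
    show "finite {z::complex. z ^ length w = 1}"
      using assms(2) by (intro finite_nth_roots) simp
    fix s t assume "param_eval (necklace_param n w) s = param_eval (necklace_param n w) t"
    then show "\<exists>c\<in>{z. z ^ length w = 1}. s = c * t"
      using param_eval_necklace_paramD[of n w t w s] assms by auto
  qed
  also have "\<dots> \<longleftrightarrow> (\<forall>j. 0 < j \<and> j < length w \<longrightarrow> rotate j w \<noteq> w)"
  proof -
    have "?\<zeta> ^ j \<noteq> 1 \<longleftrightarrow> 0 < j" if "j < length w" for j
      using that inj_on_root_unity_power[of "length w"] by (auto dest: inj_onD[of _ _ _ 0])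
    moreover have "rescale (?\<zeta> ^ j) (necklace_param n w) = necklace_param n w \<longleftrightarrow> rotate j w = w" for j
      using necklace_param_inj[of "rotate j w" n w] assms(1) by (auto simp flip: necklace_param_rotate)
    ultimately show ?thesis
      using assms(2) by (auto simp: roots_unity_eq_image)
  qed
  also have "\<dots> \<longleftrightarrow> card (rot_orbit w) = length w"
    using assms(2) by (rule card_rot_orbit_eq_length_iff[symmetric])
  finally show ?thesis .
qed

lemma param_image_necklace_param_eq_iff:
  assumes "set v \<subseteq> {..<n}" "set w \<subseteq> {..<n}" "length v = length w" "w \<noteq> []"
  shows "param_image (necklace_param n v) = param_image (necklace_param n w) \<longleftrightarrow>
    rot_orbit v = rot_orbit w"
proof
  assume "param_image (necklace_param n v) = param_image (necklace_param n w)"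
  then have "\<exists>c\<in>{z. z ^ length w = 1}. necklace_param n v = rescale c (necklace_param n w)"
    using param_eval_necklace_paramD[OF _ assms] assms(4)
    by (intro rescale_of_param_image_subset) (auto intro: finite_nth_roots)
  then obtain j where "necklace_param n v = rescale (root_unity (length w) ^ j) (necklace_param n w)"
    using assms(4) by (auto simp: roots_unity_eq_image)
  then have "v = rotate j w"
    using necklace_param_inj[of v n "rotate j w"] assms(1,3) by (simp add: necklace_param_rotate)
  then show "rot_orbit v = rot_orbit w"
    using rot_orbit_eq_iff by blast
next
  assume "rot_orbit v = rot_orbit w"
  then obtain j where "v = rotate j w"
    using rot_orbit_eq_iff by blast
  then show "param_image (necklace_param n v) = param_image (necklace_param n w)"
    by (simp add: necklace_param_rotate param_image_rescale)
qed

section \<open>Osculants are curves of primitive words\<close>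

lemma dsize_pos:
  assumes "\<forall>i<length d. 0 < d ! i" "d \<noteq> []"
  shows "0 < dsize d"
proof -
  have "0 < d ! 0" "d ! 0 \<le> sum_list d"
    using assms by (simp_all add: elem_le_sum_list)
  then show ?thesis
    unfolding dsize_def by linarith
qed

lemma dparam_factor:
  assumes "\<forall>i<length d. 0 < d ! i" "is_dparam d xs" "i < length d"
  shows "degree (xs ! i + 1) = d ! i" "poly (xs ! i + 1) 0 = 1" "xs ! i + 1 \<noteq> 0"
  using assms degree_add_eq_left[of 1 "xs ! i"] by (auto simp: is_dparam_def)

lemma H_comp_osculant_eq_monom:
  assumes "\<forall>i<length d. 0 < d ! i" "d \<noteq> []" "is_dparam d xs" "monom 1 (dsize d) dvd H_comp xs"
  shows "\<exists>a. a \<noteq> 0 \<and> H_comp xs = monom a (dsize d)"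
proof -
  have len: "length xs = length d"
    using assms(3) by (simp add: is_dparam_def)
  have "0 \<notin> set (map (\<lambda>p. p + 1) xs)"
    using dparam_factor(3)[OF assms(1,3)] len by (auto simp: in_set_conv_nth)
  moreover have "map degree (map (\<lambda>p. p + 1) xs) = d"
    using dparam_factor(1)[OF assms(1,3)] len by (intro nth_equalityI) auto
  ultimately have "degree (prod_list (map (\<lambda>p. p + 1) xs)) = dsize d"
    by (simp add: degree_prod_list_eq dsize_def)
  then have deg_H: "degree (H_comp xs) = dsize d"
    using dsize_pos[OF assms(1,2)] by (simp add: H_comp_def degree_diff_1)
  then have "H_comp xs = monom (coeff (H_comp xs) (dsize d)) (dsize d)"
    using assms(4) by (intro eq_monom_if_monom_dvd) simp_all
  moreover have "coeff (H_comp xs) (dsize d) \<noteq> 0"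
    using deg_H dsize_pos[OF assms(1,2)] by (metis leading_coeff_0_iff degree_0 less_irrefl)
  ultimately show ?thesis
    by blast
qed

lemma osculant_root_word:
  assumes "\<forall>i<length d. 0 < d ! i" "d \<noteq> []" "is_dparam d xs" "H_comp xs = monom a (dsize d)"
    and r: "a * r ^ dsize d = -1"
  shows "\<exists>w. is_dword d w \<and> (\<forall>k<dsize d. \<forall>i<length d.
    w ! k = i \<longleftrightarrow> poly (xs ! i + 1) (r * root_unity (dsize d) ^ k) = 0)"
proof -
  let ?N = "dsize d" and ?n = "length d"
  define Z where "Z k i \<longleftrightarrow> poly (xs ! i + 1) (r * root_unity ?N ^ k) = 0" for k i
  have len: "length xs = ?n"
    using assms(3) by (simp add: is_dparam_def)
  have "r \<noteq> 0"
    using r dsize_pos[OF assms(1,2)] by (auto simp: power_0_left)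
  have cover: "\<exists>i\<in>{..<?n}. Z k i" for k
  proof -
    have "(root_unity ?N ^ k) ^ ?N = 1"
      by (metis power_mult mult.commute root_unity_power_self power_one)
    then have "poly (H_comp xs) (r * root_unity ?N ^ k) = -1"
      using r by (simp add: assms(4) poly_monom power_mult_distrib)
    then have "prod_list (map (\<lambda>v. v + 1) (param_eval xs (r * root_unity ?N ^ k))) = 0"
      by (simp add: poly_H_comp)
    then have "0 \<in> set (map (\<lambda>v. v + 1) (param_eval xs (r * root_unity ?N ^ k)))"
      by (simp only: prod_list_zero_iff)
    then show ?thesis
      using len by (auto simp: Z_def param_eval_def in_set_conv_nth)
  qed
  have bound: "card {k\<in>{..<?N}. Z k i} \<le> d ! i" if "i \<in> {..<?n}" for i
    using card_roots_on_scaled_roots_unity_le[OF dparam_factor(3)[OF assms(1,3)] \<open>r \<noteq> 0\<close>]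
      dparam_factor(1)[OF assms(1,3)] that by (simp add: Z_def)
  have total: "(\<Sum>i\<in>{..<?n}. d ! i) \<le> card {..<?N}"
    by (simp add: dsize_def sum_list_sum_nth atLeast0LessThan)
  \<comment> \<open>Every point \<open>r * \<zeta> ^ k\<close> is a root of some factor \<open>xs ! i + 1\<close>, which has at
    most \<open>d ! i\<close> roots, and these bounds add up to N.\<close>
  note counting = double_counting_tight[of "{..<?N}" "{..<?n}" Z, OF _ _ cover bound total]
  obtain w where w: "length w = ?N" "set w \<subseteq> {..<?n}" "\<forall>k<?N. \<forall>i<?n. w ! k = i \<longleftrightarrow> Z k i"
    using word_of_unique_choice[of ?N ?n Z] counting(1) by auto
  have count: "count_list w i = d ! i" if "i < ?n" for i
  proof -
    have "{k. k < length w \<and> w ! k = i} = {k\<in>{..<?N}. Z k i}"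
      using w that by auto
    then show ?thesis
      using counting(2)[of i] that by (simp add: count_list_conv_card)
  qed
  have "is_dword d w"
    using w(1,2) count by (simp add: is_dword_def)
  then show ?thesis
    using w(3) by (auto simp: Z_def)
qed

lemma osculant_rescales_to_necklace_param:
  assumes "\<forall>i<length d. 0 < d ! i" "d \<noteq> []" "is_dparam d xs" "monom 1 (dsize d) dvd H_comp xs"
  shows "\<exists>r w. r \<noteq> 0 \<and> is_dword d w \<and> rescale r xs = necklace_param (length d) w"
proof -
  have N: "0 < dsize d"
    using assms(1,2) by (rule dsize_pos)
  obtain a where a: "a \<noteq> 0" "H_comp xs = monom a (dsize d)"
    using H_comp_osculant_eq_monom[OF assms] by blast
  obtain r where "r ^ dsize d = - 1 / a"
    using complex_nth_root_exists[OF N] by blast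
  then have r: "a * r ^ dsize d = -1" "r \<noteq> 0"
    using a(1) N by (auto simp: power_0_left)
  obtain w where w: "is_dword d w"
    and roots: "\<And>k i. k < dsize d \<Longrightarrow> i < length d \<Longrightarrow>
      w ! k = i \<longleftrightarrow> poly (xs ! i + 1) (r * root_unity (dsize d) ^ k) = 0"
    using osculant_root_word[OF assms(1-3) a(2) r(1)] by blast
  have "(xs ! i + 1) \<circ>\<^sub>p [:0, r:] = necklace_factor w i" if i: "i < length d" for i
  proof (rule necklace_factor_unique)
    show "poly ((xs ! i + 1) \<circ>\<^sub>p [:0, r:]) 0 = 1"
      using dparam_factor(2)[OF assms(1,3) i] by (simp add: poly_pcompose)
    show "degree ((xs ! i + 1) \<circ>\<^sub>p [:0, r:]) \<le> count_list w i"
      using dparam_factor(1)[OF assms(1,3) i] w i r(2) by (simp add: degree_pcompose is_dword_def)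
    fix k assume "k < length w" "w ! k = i"
    then show "poly ((xs ! i + 1) \<circ>\<^sub>p [:0, r:]) (root_unity (length w) ^ k) = 0"
      using roots[of k i] w i by (simp add: poly_pcompose is_dword_def mult.commute)
  qed
  then have "rescale r xs = necklace_param (length d) w"
    using assms(3) by (intro nth_equalityI)
      (auto simp: rescale_def is_dparam_def pcompose_add pcompose_1 eq_diff_eq)
  then show ?thesis
    using r(2) w by blast
qed

lemma H_osculants_eq_necklace_param_images:
  assumes "\<forall>i<length d. 0 < d ! i" "d \<noteq> []"
  shows "H_osculants d = (\<lambda>w. param_image (necklace_param (length d) w)) `
    {w. is_dword d w \<and> card (rot_orbit w) = dsize d}"
proof -
  have word: "set w \<subseteq> {..<length d}" "length w = dsize d" "w \<noteq> []" if "is_dword d w" for w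
    using that dsize_pos[OF assms] by (auto simp: is_dword_def)
  show ?thesis
  proof (intro set_eqI iffI)
    fix C assume "C \<in> H_osculants d"
    then obtain xs where xs: "C = param_image xs" "is_dparam d xs" "one_fold xs"
      "monom 1 (dsize d) dvd H_comp xs"
      unfolding H_osculants_def by blast
    obtain r w where rw: "r \<noteq> 0" "is_dword d w" "rescale r xs = necklace_param (length d) w"
      using osculant_rescales_to_necklace_param[OF assms xs(2,4)] by blast
    have "C = param_image (necklace_param (length d) w)"
      using xs(1) rw(3) param_image_rescale[OF rw(1), of xs] by simp
    moreover have "card (rot_orbit w) = dsize d"
      using one_fold_rescale[OF rw(1) xs(3)] one_fold_necklace_param_iff[of w] rw word by simp
    ultimately show "C \<in> (\<lambda>w. param_image (necklace_param (length d) w)) `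
        {w. is_dword d w \<and> card (rot_orbit w) = dsize d}"
      using rw(2) by blast
  next
    fix C assume "C \<in> (\<lambda>w. param_image (necklace_param (length d) w)) `
        {w. is_dword d w \<and> card (rot_orbit w) = dsize d}"
    then obtain w where w: "C = param_image (necklace_param (length d) w)" "is_dword d w"
      "card (rot_orbit w) = dsize d"
      by blast
    have "is_dparam d (necklace_param (length d) w)"
      using w(2) assms(1) by (rule is_dparam_necklace_param)
    moreover have "one_fold (necklace_param (length d) w)"
      using one_fold_necklace_param_iff[of w] w word by simp
    moreover have "monom 1 (dsize d) dvd H_comp (necklace_param (length d) w)"
      using H_comp_necklace_param[of w] w(2) word by simp
    ultimately show "C \<in> H_osculants d"
      unfolding H_osculants_def using w(1) by blast
  qed
qed

lemma H_osculants_Nil: "H_osculants [] = {}"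
proof -
  have "\<not> one_fold []"
  proof
    assume "one_fold []"
    then have "\<exists>S. finite S \<and> (\<forall>t s. t \<notin> S \<longrightarrow> s = (t::complex))"
      by (simp add: one_fold_def param_eval_def)
    then obtain S where "finite S" and S: "\<forall>t s. t \<notin> S \<longrightarrow> s = (t::complex)"
      by blast
    then obtain t where "t \<notin> S"
      using ex_new_if_finite[OF infinite_UNIV_char_0] by blast
    then have "\<forall>s. s = t"
      using S by blast
    then have "t + 1 = t"
      by (rule spec)
    then show False
      by simp
  qed
  moreover have "xs = []" if "is_dparam [] xs" for xs
    using that by (simp add: is_dparam_def)
  ultimately show ?thesis
    unfolding H_osculants_def by blast
qed

lemma primitive_necklaces_Nil: "primitive_necklaces [] = {}"
proof -
  have "card (rot_orbit []) \<noteq> dsize []"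
    by (simp add: rot_orbit_def dsize_def)
  moreover have "w = []" if "is_dword [] w" for w
    using that by (simp add: is_dword_def dsize_def)
  ultimately show ?thesis
    unfolding primitive_necklaces_def by blast
qed

theorem theorem3p6:
  fixes d :: "nat list"
  assumes "\<forall>i < length d. d ! i > 0"
  shows "\<exists>\<phi>. bij_betw \<phi> (H_osculants d) (primitive_necklaces d)"
proof (cases "d = []")
  case True
  then show ?thesis
    by (simp add: H_osculants_Nil primitive_necklaces_Nil bij_betw_def)
next
  case False
  define S where "S = {w. is_dword d w \<and> card (rot_orbit w) = dsize d}"
  have osculants: "H_osculants d = (\<lambda>w. param_image (necklace_param (length d) w)) ` S"
    unfolding S_def using assms False by (rule H_osculants_eq_necklace_param_images)
  have necklaces: "primitive_necklaces d = rot_orbit ` S"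
    unfolding S_def primitive_necklaces_def by blast
  have "param_image (necklace_param (length d) v) = param_image (necklace_param (length d) w)
      \<longleftrightarrow> rot_orbit v = rot_orbit w" if "v \<in> S" "w \<in> S" for v w
    using that dsize_pos[OF assms False]
    by (intro param_image_necklace_param_eq_iff) (auto simp: S_def is_dword_def)
  then have "bij_betw (\<lambda>C. rot_orbit (inv_into S (\<lambda>w. param_image (necklace_param (length d) w)) C))
      (H_osculants d) (primitive_necklaces d)"
    unfolding osculants necklaces by (rule bij_betw_images_same_kernel)
  then show ?thesis
    by blast
qed

end
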